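(* Let $\mathbf M=(M_\alpha)_{\alpha\in\mathbb N_0^d}$ and $\mathbf N=(N_\alpha)_{\alpha\in\mathbb N_0^d}$ be sequences of positive reals with $M_0=N_0=1$, and suppose there exist $H,C,B>0$ such that $\alpha^{\alpha/2}M_\beta\le B\,C^{|\alpha|}H^{|\alpha+\beta|}N_{\alpha+\beta}$ for all $\alpha,\beta\in\mathbb N_0^d$. Then, for all $\gamma\in\mathbb N_0^d$, $$\sup_{\alpha,\beta\in\mathbb N_0^d}\frac{\|x^\alpha\partial^\beta H_\gamma\|_{L^2}}{(2HC)^{|\alpha+\beta|}N_{\alpha+\beta}}\le B\,e^{\omega_{\mathbf M}(\gamma^{1/2}/C)},$$ where $\gamma^{1/2}:=(\gamma_1^{1/2},\dots,\gamma_d^{1/2})$ and $B,C,H$ are the constants above.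
   Context: Notation: $|\alpha|=\sum\alpha_j$, $\alpha^{\alpha/2}=\prod_j\alpha_j^{\alpha_j/2}$ with $0^0=1$. The associated weight function of $\mathbf M$ is $\omega_{\mathbf M}(t)=\sup_{\alpha\in\mathbb N^d_{0,t}}\log\frac{|t^\alpha|}{M_\alpha}$ ($t\in\mathbb R^d$), where $\mathbb N^d_{0,t}=\{\alpha:\alpha_j=0\text{ whenever }t_j=0\}$. Hermite functions: $H_\gamma(x)=(2^{|\gamma|}\gamma!\pi^{d/2})^{-1/2}h_\gamma(x)e^{-|x|^2/2}$, $h_\gamma(x)=(-1)^{|\gamma|}e^{|x|^2}\partial^\gamma e^{-|x|^2}$. *)

theory Defs
  imports "HOL-Analysis.Analysis"
begin

text \<open>Multi-indices in N_0^d are functions 'n => nat on a finite index type 'n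
  (d = CARD('n)); points of R^d are vectors real^'n.\<close>

definition mlen :: "('n::finite \<Rightarrow> nat) \<Rightarrow> nat" where
  "mlen \<alpha> = (\<Sum>j\<in>UNIV. \<alpha> j)"

definition madd :: "('n \<Rightarrow> nat) \<Rightarrow> ('n \<Rightarrow> nat) \<Rightarrow> ('n \<Rightarrow> nat)" where
  "madd \<alpha> \<beta> = (\<lambda>j. \<alpha> j + \<beta> j)"

definition mfact :: "('n::finite \<Rightarrow> nat) \<Rightarrow> real" where
  "mfact \<alpha> = (\<Prod>j\<in>UNIV. fact (\<alpha> j))"

text \<open>alpha^(alpha/2) = prod_j alpha_j^(alpha_j/2) with 0^0 = 1\<close>
definition mselfpow_half :: "('n::finite \<Rightarrow> nat) \<Rightarrow> real" where
  "mselfpow_half \<alpha> = (\<Prod>j\<in>UNIV. sqrt (real (\<alpha> j)) ^ (\<alpha> j))"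

definition mpow :: "real^'n::finite \<Rightarrow> ('n \<Rightarrow> nat) \<Rightarrow> real" where
  "mpow x \<alpha> = (\<Prod>j\<in>UNIV. (x $ j) ^ (\<alpha> j))"

definition pdiff :: "'n::finite \<Rightarrow> (real^'n \<Rightarrow> real) \<Rightarrow> real^'n \<Rightarrow> real" where
  "pdiff j f x = deriv (\<lambda>t. f (x + t *\<^sub>R axis j 1)) 0"

definition Dmulti :: "('n::{finite,linorder} \<Rightarrow> nat) \<Rightarrow> (real^'n::{finite,linorder} \<Rightarrow> real) \<Rightarrow> real^'n::{finite,linorder} \<Rightarrow> real" where
  "Dmulti \<beta> f = foldr (\<lambda>j g. (pdiff j ^^ \<beta> j) g) (sorted_list_of_set UNIV) f"

definition hermite_poly :: "('n::{finite,linorder} \<Rightarrow> nat) \<Rightarrow> real^'n::{finite,linorder} \<Rightarrow> real" where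
  "hermite_poly \<gamma> x = (-1) ^ mlen \<gamma> * exp ((norm x)\<^sup>2) *
      Dmulti \<gamma> (\<lambda>y. exp (- (norm y)\<^sup>2)) x"

definition hermite_fun :: "('n::{finite,linorder} \<Rightarrow> nat) \<Rightarrow> real^'n::{finite,linorder} \<Rightarrow> real" where
  "hermite_fun \<gamma> x = inverse (sqrt (2 ^ mlen \<gamma> * mfact \<gamma> * pi powr (real CARD('n) / 2)))
      * hermite_poly \<gamma> x * exp (- (norm x)\<^sup>2 / 2)"

definition L2norm :: "(real^'n::finite \<Rightarrow> real) \<Rightarrow> real" where
  "L2norm f = sqrt (integral\<^sup>L lborel (\<lambda>x. (f x)\<^sup>2))"

definition weight_fun :: "(('n::finite \<Rightarrow> nat) \<Rightarrow> real) \<Rightarrow> real^'n \<Rightarrow> ereal" where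
  "weight_fun M t = (SUP \<alpha>\<in>{\<alpha>. \<forall>j. t $ j = 0 \<longrightarrow> \<alpha> j = 0}.
       ereal (ln (\<bar>mpow t \<alpha>\<bar> / M \<alpha>)))"

definition exp_ereal :: "ereal \<Rightarrow> ereal" where
  "exp_ereal x = (case x of ereal r \<Rightarrow> ereal (exp r) | PInfty \<Rightarrow> PInfty | MInfty \<Rightarrow> 0)"

end

theory Submission
  imports Defs "HOL-Probability.Distributions"
begin

(* The Hermite function H_gamma is the tensor product of the one-dimensional Hermite functions
   psi_(gamma_j), so by Fubini the L^2 norm of x^alpha d^beta H_gamma is the product of the norms
   of t^(alpha_j) psi_(gamma_j)^(beta_j).  In one variable, multiplication by t and
   differentiation act through the ladder relations
     t psi_n = c_n psi_(n-1) + c_(n+1) psi_(n+1),   psi_n' = c_n psi_(n-1) - c_(n+1) psi_(n+1),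
   c_k = sqrt (k / 2), so t^a psi_n^(b) is a combination of unit vectors psi_m whose coefficients
   have absolute sum at most (2 sqrt (max n (a + b)))^(a + b), and by Cauchy-Schwarz this bounds
   its norm.  Splitting alpha + beta = a + b, where a collects the coordinates with
   gamma_j < alpha_j + beta_j, the product of these bounds is 2^|alpha+beta| a^(a/2) (gamma^(1/2))^b.
   The hypothesis turns a^(a/2) M_b into B C^|a| H^|alpha+beta| N_(alpha+beta), and what is left,
   (gamma^(1/2) / C)^b / M_b, is one of the terms in the supremum defining the weight function. *)

(* Physicists' Hermite polynomials, the one-dimensional h_n of the statement.  At n = 0 the
   truncated n - 1 is harmless since its coefficient real n vanishes. *)
fun hermite :: "nat \<Rightarrow> real \<Rightarrow> real" where
  "hermite 0 t = 1"
| "hermite (Suc n) t = 2 * t * hermite n t - 2 * real n * hermite (n - 1) t"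

declare hermite.simps(2) [simp del]

lemma hermite_has_real_derivative:
  "(hermite n has_real_derivative 2 * real n * hermite (n - 1) t) (at t)"
proof (induction n t rule: hermite.induct)
  case (1 t)
  then show ?case by simp
next
  case (2 n t)
  have "(hermite (Suc n) has_real_derivative
      2 * hermite n t + 2 * t * (2 * real n * hermite (n - 1) t)
        - 2 * real n * (2 * real (n - 1) * hermite (n - 1 - 1) t)) (at t)"
    unfolding hermite.simps(2)[abs_def]
    by (rule derivative_eq_intros 2 refl)+ simp
  moreover have "2 * hermite n t + 2 * t * (2 * real n * hermite (n - 1) t)
        - 2 * real n * (2 * real (n - 1) * hermite (n - 1 - 1) t) = 2 * real (Suc n) * hermite n t"
    by (cases n) (simp_all add: hermite.simps(2) algebra_simps)
  ultimately show ?case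
    by simp
qed

lemma continuous_on_hermite [continuous_intros]: "continuous_on S (hermite n)"
  using hermite_has_real_derivative
  by (meson DERIV_isCont continuous_at_imp_continuous_on)

lemma hermite_polynomial_bound: "\<exists>A. \<forall>t. \<bar>hermite n t\<bar> \<le> A * (1 + \<bar>t\<bar>) ^ n"
proof (induction n rule: less_induct)
  case (less n)
  show ?case
  proof (cases n)
    case 0
    then show ?thesis by (intro exI[of _ 1]) simp
  next
    case (Suc m)
    obtain A1 where A1: "\<And>t. \<bar>hermite m t\<bar> \<le> A1 * (1 + \<bar>t\<bar>) ^ m"
      using less Suc by blast
    obtain A2 where A2: "\<And>t. \<bar>hermite (m - 1) t\<bar> \<le> A2 * (1 + \<bar>t\<bar>) ^ (m - 1)"
      using less Suc by (metis diff_le_self le_imp_less_Suc)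
    have "A1 \<ge> 0" "A2 \<ge> 0"
      using A1[of 0] A2[of 0] by auto
    show ?thesis
    proof (intro exI allI)
      fix t :: real
      have "\<bar>hermite n t\<bar> \<le> 2 * (1 + \<bar>t\<bar>) * \<bar>hermite m t\<bar> + 2 * real m * \<bar>hermite (m - 1) t\<bar>"
        unfolding Suc hermite.simps(2)
        by (auto simp: abs_mult intro!: abs_triangle_ineq4[THEN order_trans] mult_right_mono)
      also have "\<dots> \<le> 2 * (1 + \<bar>t\<bar>) * (A1 * (1 + \<bar>t\<bar>) ^ m) + 2 * real m * (A2 * (1 + \<bar>t\<bar>) ^ n)"
        using \<open>A2 \<ge> 0\<close> A2[of t] Suc
        by (intro add_mono mult_left_mono A1 order_trans[OF A2] mult_left_mono power_increasing) auto
      also have "\<dots> = (2 * A1 + 2 * real m * A2) * (1 + \<bar>t\<bar>) ^ n"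
        using Suc by (simp add: algebra_simps)
      finally show "\<bar>hermite n t\<bar> \<le> (2 * A1 + 2 * real m * A2) * (1 + \<bar>t\<bar>) ^ n" .
    qed
  qed
qed

lemma one_plus_abs_power_le: "(1 + \<bar>x\<bar>) ^ K \<le> 2 ^ (2 * K) * (1 + x ^ (2 * K))"
  for x :: real
proof -
  have "(1 + \<bar>x\<bar>) ^ K \<le> (2 * max 1 \<bar>x\<bar>) ^ (2 * K)"
    by (rule order_trans[OF power_mono power_increasing]) auto
  also have "\<dots> = 2 ^ (2 * K) * max 1 \<bar>x\<bar> ^ (2 * K)"
    by (simp add: power_mult_distrib)
  also have "max 1 \<bar>x\<bar> ^ (2 * K) \<le> 1 + x ^ (2 * K)"
    by (cases "\<bar>x\<bar> \<le> 1") (simp_all add: max_def power_mult power_even_abs)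
  finally show ?thesis
    by simp
qed

lemma integrable_one_plus_abs_power_gaussian:
  "integrable lborel (\<lambda>t::real. (1 + \<bar>t\<bar>) ^ K * exp (- t\<^sup>2))"
proof (rule Bochner_Integration.integrable_bound)
  have moment: "integrable lborel (\<lambda>t::real. exp (- t\<^sup>2) * t ^ (2 * k))" for k
    using has_bochner_integral_even_function[OF gaussian_moment_even_pos[of k]]
    by (auto intro: integrable.intros)
  show "integrable lborel (\<lambda>t::real. 2 ^ (2 * K) * (exp (- t\<^sup>2) + exp (- t\<^sup>2) * t ^ (2 * K)))"
    using moment[of 0] moment[of K]
    by (intro integrable_mult_right Bochner_Integration.integrable_add) simp_all
  show "(\<lambda>t::real. (1 + \<bar>t\<bar>) ^ K * exp (- t\<^sup>2)) \<in> borel_measurable lborel"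
    by (simp add: measurable_lborel2 borel_measurable_continuous_onI continuous_intros)
  have "(1 + \<bar>t\<bar>) ^ K * exp (- t\<^sup>2) \<le> 2 ^ (2 * K) * (1 + t ^ (2 * K)) * exp (- t\<^sup>2)" for t :: real
    by (intro mult_right_mono one_plus_abs_power_le) simp
  then show "AE t in lborel. norm ((1 + \<bar>t::real\<bar>) ^ K * exp (- t\<^sup>2))
      \<le> norm (2 ^ (2 * K) * (exp (- t\<^sup>2) + exp (- t\<^sup>2) * t ^ (2 * K)))"
    by (intro AE_I2) (simp add: algebra_simps power_mult)
qed

lemma integrable_polynomially_bounded_gaussian:
  fixes p :: "real \<Rightarrow> real"
  assumes "continuous_on UNIV p" and "\<And>t. \<bar>p t\<bar> \<le> A * (1 + \<bar>t\<bar>) ^ K"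
  shows "integrable lborel (\<lambda>t. p t * exp (- t\<^sup>2))"
proof (rule Bochner_Integration.integrable_bound)
  show "integrable lborel (\<lambda>t::real. A * ((1 + \<bar>t\<bar>) ^ K * exp (- t\<^sup>2)))"
    by (intro integrable_mult_right integrable_one_plus_abs_power_gaussian)
  show "(\<lambda>t. p t * exp (- t\<^sup>2)) \<in> borel_measurable lborel"
    using assms(1) by (simp add: measurable_lborel2 borel_measurable_continuous_onI continuous_intros)
  have "\<bar>p t\<bar> * exp (- t\<^sup>2) \<le> \<bar>A\<bar> * (1 + \<bar>t\<bar>) ^ K * exp (- t\<^sup>2)" for t
    using assms(2)[of t] abs_ge_self[of A] by (intro mult_right_mono) (auto intro: order_trans)
  then show "AE t in lborel. norm (p t * exp (- t\<^sup>2)) \<le> norm (A * ((1 + \<bar>t\<bar>) ^ K * exp (- t\<^sup>2)))"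
    by (intro AE_I2) (simp add: abs_mult mult.assoc)
qed

lemma tendsto_polynomially_bounded_gaussian:
  fixes p :: "real \<Rightarrow> real"
  assumes "\<And>t. \<bar>p t\<bar> \<le> A * (1 + \<bar>t\<bar>) ^ K"
  shows "((\<lambda>t. p t * exp (- t\<^sup>2)) \<longlongrightarrow> 0) at_infinity"
proof (rule Lim_null_comparison)
  have "exp (- t\<^sup>2) \<le> exp 2 / exp (1 + \<bar>t\<bar>)" for t :: real
  proof -
    have "0 \<le> (\<bar>t\<bar> - 1)\<^sup>2"
      by simp
    then have "- t\<^sup>2 \<le> 2 - (1 + \<bar>t\<bar>)"
      by (simp add: power2_diff power2_abs)
    then show ?thesis
      by (simp add: exp_diff[symmetric])
  qed
  then have "\<bar>p t * exp (- t\<^sup>2)\<bar> \<le> A * (1 + \<bar>t\<bar>) ^ K * (exp 2 / exp (1 + \<bar>t\<bar>))" for t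
    using assms[of t] unfolding abs_mult abs_exp_cancel
    by (intro mult_mono) auto
  then show "\<forall>\<^sub>F t in at_infinity. norm (p t * exp (- t\<^sup>2)) \<le> A * exp 2 * ((1 + \<bar>t\<bar>) ^ K / exp (1 + \<bar>t\<bar>))"
    by (intro always_eventually allI) (simp add: field_simps)
  have "filterlim (\<lambda>t::real. 1 + \<bar>t\<bar>) at_top at_infinity"
    by (intro filterlim_tendsto_add_at_top[OF tendsto_const]
        filterlim_norm_at_top[where 'a=real, unfolded real_norm_def])
  from filterlim_compose[OF tendsto_power_div_exp_0 this]
  show "((\<lambda>t. A * exp 2 * ((1 + \<bar>t\<bar>) ^ K / exp (1 + \<bar>t\<bar>))) \<longlongrightarrow> 0) at_infinity"
    by (intro tendsto_mult_right_zero) (simp add: o_def)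
qed

lemma integral_lborel_derivative_eq_0:
  fixes f F :: "real \<Rightarrow> real"
  assumes "\<And>x. (F has_real_derivative f x) (at x)" and "continuous_on UNIV f"
    and "integrable lborel f" and "(F \<longlongrightarrow> 0) at_infinity"
  shows "integral\<^sup>L lborel f = 0"
proof -
  have "(LBINT x=-\<infinity>..\<infinity>. f x) = 0 - 0"
  proof (rule interval_integral_FTC_integrable)
    show "(F has_vector_derivative f x) (at x)" for x
      using assms(1) by (simp add: has_real_derivative_iff_has_vector_derivative)
    show "isCont f x" for x
      using assms(2) by (simp add: continuous_on_eq_continuous_at)
    show "set_integrable lborel (einterval (- \<infinity>) \<infinity>) f"
      using assms(3) by (simp add: set_integrable_def)
    show "((F \<circ> real_of_ereal) \<longlongrightarrow> 0) (at_right (- \<infinity>))"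
      using filterlim_mono[OF assms(4) order_refl at_bot_le_at_infinity]
      by (simp add: ereal_tendsto_simps1)
    show "((F \<circ> real_of_ereal) \<longlongrightarrow> 0) (at_left \<infinity>)"
      using filterlim_mono[OF assms(4) order_refl at_top_le_at_infinity]
      by (simp add: ereal_tendsto_simps1)
  qed simp
  then show ?thesis
    by (simp add: interval_lebesgue_integral_def set_lebesgue_integral_def)
qed

lemma hermite_gaussian_has_real_derivative:
  "((\<lambda>t. hermite n t * exp (- t\<^sup>2)) has_real_derivative - hermite (Suc n) t * exp (- t\<^sup>2)) (at t)"
  by (auto intro!: derivative_eq_intros hermite_has_real_derivative
      simp: hermite.simps(2) algebra_simps)

lemma hermite_product_polynomial_bound:
  "\<exists>A. \<forall>t. \<bar>hermite m t * hermite n t\<bar> \<le> A * (1 + \<bar>t\<bar>) ^ (m + n)"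
proof -
  obtain A B where A: "\<And>t. \<bar>hermite m t\<bar> \<le> A * (1 + \<bar>t\<bar>) ^ m"
    and B: "\<And>t. \<bar>hermite n t\<bar> \<le> B * (1 + \<bar>t\<bar>) ^ n"
    using hermite_polynomial_bound by metis
  have "\<bar>hermite m t * hermite n t\<bar> \<le> (A * (1 + \<bar>t\<bar>) ^ m) * (B * (1 + \<bar>t\<bar>) ^ n)" for t
    unfolding abs_mult by (intro mult_mono A B) (auto intro: order_trans[OF abs_ge_zero A])
  then show ?thesis
    by (intro exI[of _ "A * B"]) (simp add: power_add algebra_simps)
qed

lemma integrable_hermite_product_gaussian:
  "integrable lborel (\<lambda>t. hermite m t * hermite n t * exp (- t\<^sup>2))"
  using hermite_product_polynomial_bound[of m n]
  by (auto intro!: integrable_polynomially_bounded_gaussian continuous_intros)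

lemma tendsto_hermite_product_gaussian:
  "((\<lambda>t. hermite m t * hermite n t * exp (- t\<^sup>2)) \<longlongrightarrow> 0) at_infinity"
  using hermite_product_polynomial_bound[of m n]
  by (auto intro: tendsto_polynomially_bounded_gaussian)

lemma integral_hermite_square_gaussian:
  "integral\<^sup>L lborel (\<lambda>t. hermite n t * hermite n t * exp (- t\<^sup>2)) = 2 ^ n * fact n * sqrt pi"
proof (induction n)
  case 0
  have "has_bochner_integral lborel (\<lambda>t::real. exp (- t\<^sup>2)) (2 *\<^sub>R (sqrt pi / 2))"
    by (rule has_bochner_integral_even_function[OF gaussian_moment_0]) simp
  then show ?case
    by (simp add: has_bochner_integral_integral_eq)
next
  case (Suc n)
  let ?I = "\<lambda>m. integral\<^sup>L lborel (\<lambda>t. hermite m t * hermite m t * exp (- t\<^sup>2))"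
  \<comment> \<open>?f is the derivative of hermite (Suc n) t * hermite n t * exp (- t^2), which vanishes at infinity\<close>
  let ?f = "\<lambda>t. 2 * real (Suc n) * (hermite n t * hermite n t * exp (- t\<^sup>2))
    - hermite (Suc n) t * hermite (Suc n) t * exp (- t\<^sup>2)"
  have "integral\<^sup>L lborel ?f = 0"
  proof (rule integral_lborel_derivative_eq_0)
    show "((\<lambda>t. hermite (Suc n) t * hermite n t * exp (- t\<^sup>2)) has_real_derivative ?f t) (at t)" for t
      using DERIV_mult[OF hermite_has_real_derivative[of "Suc n" t] hermite_gaussian_has_real_derivative[of n t]]
      by (simp add: algebra_simps)
    show "integrable lborel ?f"
      by (intro Bochner_Integration.integrable_diff integrable_mult_right integrable_hermite_product_gaussian)
  qed (auto intro!: continuous_intros tendsto_hermite_product_gaussian)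
  moreover have "integral\<^sup>L lborel ?f = 2 * real (Suc n) * ?I n - ?I (Suc n)"
    by (simp add: integrable_hermite_product_gaussian)
  ultimately show ?case
    using Suc by (simp add: algebra_simps)
qed

definition hermite_norm :: "nat \<Rightarrow> real" where
  "hermite_norm n = sqrt (2 ^ n * fact n * sqrt pi)"

definition hermite_function :: "nat \<Rightarrow> real \<Rightarrow> real" where
  "hermite_function n t = hermite n t * exp (- t\<^sup>2 / 2) / hermite_norm n"

definition ladder_coeff :: "nat \<Rightarrow> real" where
  "ladder_coeff k = sqrt (real k / 2)"

lemma hermite_norm_pos: "hermite_norm n > 0"
  by (simp add: hermite_norm_def)

lemma ladder_coeff_nonneg: "ladder_coeff k \<ge> 0"
  by (simp add: ladder_coeff_def)

lemma ladder_coeff_mono: "m \<le> k \<Longrightarrow> ladder_coeff m \<le> ladder_coeff k"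
  by (simp add: ladder_coeff_def)

lemma ladder_coeff_square: "ladder_coeff k * ladder_coeff k = real k / 2"
  by (simp add: ladder_coeff_def)

lemma hermite_norm_Suc: "hermite_norm (Suc n) = 2 * ladder_coeff (Suc n) * hermite_norm n"
proof -
  have "hermite_norm (Suc n) = sqrt (2 * real (Suc n)) * hermite_norm n"
    unfolding hermite_norm_def by (simp add: real_sqrt_mult[symmetric] algebra_simps)
  also have "sqrt (2 * real (Suc n)) = sqrt (4 * (real (Suc n) / 2))"
    by simp
  also have "\<dots> = 2 * ladder_coeff (Suc n)"
    by (simp only: real_sqrt_mult real_sqrt_four ladder_coeff_def)
  finally show ?thesis .
qed

lemma hermite_function_square:
  "(hermite_function n t)\<^sup>2 = hermite n t * hermite n t * exp (- t\<^sup>2) / (hermite_norm n)\<^sup>2"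
  by (simp add: hermite_function_def power2_eq_square field_simps exp_add[symmetric])

lemma integrable_hermite_function_square: "integrable lborel (\<lambda>t. (hermite_function n t)\<^sup>2)"
  unfolding hermite_function_square
  by (intro integrable_divide integrable_hermite_product_gaussian)

lemma integral_hermite_function_square: "integral\<^sup>L lborel (\<lambda>t. (hermite_function n t)\<^sup>2) = 1"
  using hermite_norm_pos[of n]
  by (simp add: hermite_function_square integral_hermite_square_gaussian hermite_norm_def)

lemma hermite_function_lowering:
  "real n * hermite (n - 1) t * exp (- t\<^sup>2 / 2) / hermite_norm n
    = ladder_coeff n * hermite_function (n - 1) t"
proof (cases n)
  case (Suc m)
  have "real (Suc m) = 2 * (ladder_coeff (Suc m) * ladder_coeff (Suc m))"
    by (simp add: ladder_coeff_square)
  then show ?thesis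
    using Suc hermite_norm_pos[of m] ladder_coeff_nonneg[of "Suc m"]
    by (simp add: hermite_function_def hermite_norm_Suc field_simps)
qed (simp add: ladder_coeff_def)

lemma hermite_function_raising:
  "hermite (Suc n) t * exp (- t\<^sup>2 / 2) / (2 * hermite_norm n)
    = ladder_coeff (Suc n) * hermite_function (Suc n) t"
  using hermite_norm_pos[of n] ladder_coeff_nonneg[of "Suc n"]
  by (simp add: hermite_function_def hermite_norm_Suc ladder_coeff_def field_simps)

lemma times_hermite_function:
  "t * hermite_function n t
    = ladder_coeff n * hermite_function (n - 1) t + ladder_coeff (Suc n) * hermite_function (Suc n) t"
proof -
  have "t * hermite_function n t
      = hermite (Suc n) t * exp (- t\<^sup>2 / 2) / (2 * hermite_norm n)
        + real n * hermite (n - 1) t * exp (- t\<^sup>2 / 2) / hermite_norm n"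
    using hermite_norm_pos[of n]
    by (simp add: hermite_function_def hermite.simps(2) field_simps)
  then show ?thesis
    by (simp only: hermite_function_lowering hermite_function_raising add.commute)
qed

lemma hermite_function_has_real_derivative:
  "(hermite_function n has_real_derivative
      ladder_coeff n * hermite_function (n - 1) t - ladder_coeff (Suc n) * hermite_function (Suc n) t) (at t)"
proof -
  have "(hermite_function n has_real_derivative
      2 * (real n * hermite (n - 1) t * exp (- t\<^sup>2 / 2) / hermite_norm n) - t * hermite_function n t) (at t)"
    unfolding hermite_function_def[abs_def] using hermite_norm_pos[of n]
    by (auto intro!: derivative_eq_intros hermite_has_real_derivative simp: field_simps)
  then show ?thesis
    unfolding hermite_function_lowering times_hermite_function
    by (rule DERIV_cong) (simp add: algebra_simps)
qed

(* A list of pairs (c, m) encodes the combination of the c * hermite_function m;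
   ladder 1 implements multiplication by t and ladder (-1) differentiation. *)
definition hermite_sum :: "(real \<times> nat) list \<Rightarrow> real \<Rightarrow> real" where
  "hermite_sum xs t = (\<Sum>(c, m)\<leftarrow>xs. c * hermite_function m t)"

definition ladder :: "real \<Rightarrow> (real \<times> nat) list \<Rightarrow> (real \<times> nat) list" where
  "ladder s xs = concat (map (\<lambda>(c, m).
     [(c * ladder_coeff m, m - 1), (s * c * ladder_coeff (Suc m), Suc m)]) xs)"

definition coeff_weight :: "(real \<times> nat) list \<Rightarrow> real" where
  "coeff_weight xs = (\<Sum>(c, m)\<leftarrow>xs. \<bar>c\<bar>)"

lemma hermite_sum_simps [simp]:
  "hermite_sum [] t = 0"
  "hermite_sum ((c, m) # xs) t = c * hermite_function m t + hermite_sum xs t"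
  by (simp_all add: hermite_sum_def)

lemma ladder_simps [simp]:
  "ladder s [] = []"
  "ladder s ((c, m) # xs) = (c * ladder_coeff m, m - 1) # (s * c * ladder_coeff (Suc m), Suc m) # ladder s xs"
  by (simp_all add: ladder_def)

lemma coeff_weight_simps [simp]:
  "coeff_weight [] = 0"
  "coeff_weight ((c, m) # xs) = \<bar>c\<bar> + coeff_weight xs"
  by (simp_all add: coeff_weight_def)

lemma coeff_weight_nonneg: "coeff_weight xs \<ge> 0"
  by (induction xs) auto

lemma times_hermite_sum: "t * hermite_sum xs t = hermite_sum (ladder 1 xs) t"
  by (induction xs) (auto simp: times_hermite_function algebra_simps)

lemma power_times_hermite_sum: "t ^ a * hermite_sum xs t = hermite_sum ((ladder 1 ^^ a) xs) t"
  by (induction a) (simp_all add: times_hermite_sum[symmetric] algebra_simps)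

lemma hermite_sum_has_real_derivative:
  "(hermite_sum xs has_real_derivative hermite_sum (ladder (-1) xs) t) (at t)"
proof (induction xs)
  case (Cons p xs)
  obtain c m where p: "p = (c, m)"
    by fastforce
  have "((\<lambda>t. c * hermite_function m t + hermite_sum xs t) has_real_derivative
      c * (ladder_coeff m * hermite_function (m - 1) t - ladder_coeff (Suc m) * hermite_function (Suc m) t)
      + hermite_sum (ladder (-1) xs) t) (at t)"
    by (intro DERIV_add DERIV_cmult hermite_function_has_real_derivative Cons)
  then show ?case
    using p by (simp add: algebra_simps)
qed simp

lemma deriv_hermite_sum: "deriv (hermite_sum xs) = hermite_sum (ladder (-1) xs)"
  using DERIV_imp_deriv[OF hermite_sum_has_real_derivative] by blast

lemma funpow_deriv_hermite_sum: "(deriv ^^ k) (hermite_sum xs) = hermite_sum ((ladder (-1) ^^ k) xs)"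
  by (induction k) (simp_all add: deriv_hermite_sum)

lemma continuous_on_hermite_sum: "continuous_on S (hermite_sum xs)"
  by (meson DERIV_isCont continuous_at_imp_continuous_on hermite_sum_has_real_derivative)

lemma ladder_index_le: "snd ` set xs \<subseteq> {..K} \<Longrightarrow> snd ` set (ladder s xs) \<subseteq> {..Suc K}"
  by (induction xs) fastforce+

lemma coeff_weight_ladder_le:
  assumes "\<bar>s\<bar> = 1" and "snd ` set xs \<subseteq> {..K}"
  shows "coeff_weight (ladder s xs) \<le> 2 * ladder_coeff (Suc K) * coeff_weight xs"
  using assms(2)
proof (induction xs)
  case (Cons p xs)
  obtain c m where p: "p = (c, m)"
    by fastforce
  have "m \<le> K"
    using Cons.prems p by auto
  then have "ladder_coeff m + ladder_coeff (Suc m) \<le> 2 * ladder_coeff (Suc K)"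
    using ladder_coeff_mono[of m "Suc K"] ladder_coeff_mono[of "Suc m" "Suc K"] by simp
  then have "\<bar>c\<bar> * (ladder_coeff m + ladder_coeff (Suc m)) \<le> \<bar>c\<bar> * (2 * ladder_coeff (Suc K))"
    by (rule mult_left_mono) simp
  moreover have "coeff_weight (ladder s xs) \<le> 2 * ladder_coeff (Suc K) * coeff_weight xs"
    using Cons by simp
  ultimately show ?case
    using p assms(1) by (simp add: abs_mult ladder_coeff_nonneg algebra_simps)
qed simp

lemma funpow_ladder_bounds:
  assumes "\<bar>s\<bar> = 1" and "snd ` set xs \<subseteq> {..K}"
  shows "snd ` set ((ladder s ^^ a) xs) \<subseteq> {..K + a}
    \<and> coeff_weight ((ladder s ^^ a) xs) \<le> (2 * ladder_coeff (K + a)) ^ a * coeff_weight xs"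
proof (induction a)
  case (Suc a)
  let ?ys = "(ladder s ^^ a) xs"
  have "coeff_weight (ladder s ?ys) \<le> 2 * ladder_coeff (Suc (K + a)) * coeff_weight ?ys"
    using coeff_weight_ladder_le[OF assms(1)] Suc by simp
  also have "\<dots> \<le> 2 * ladder_coeff (Suc (K + a)) * ((2 * ladder_coeff (K + a)) ^ a * coeff_weight xs)"
    using Suc by (intro mult_left_mono) (simp_all add: ladder_coeff_nonneg)
  also have "\<dots> \<le> 2 * ladder_coeff (Suc (K + a)) * ((2 * ladder_coeff (Suc (K + a))) ^ a * coeff_weight xs)"
    by (intro mult_left_mono mult_right_mono power_mono)
      (simp_all add: ladder_coeff_nonneg ladder_coeff_mono coeff_weight_nonneg)
  finally show ?case
    using Suc ladder_index_le[of ?ys "K + a" s] by (simp add: algebra_simps)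
qed (use assms in simp)

lemma square_add_le_weighted:
  fixes c y b W S :: real
  assumes "b\<^sup>2 \<le> W * S" and "W \<ge> 0" and "S \<ge> 0"
  shows "(c * y + b)\<^sup>2 \<le> (\<bar>c\<bar> + W) * (\<bar>c\<bar> * y\<^sup>2 + S)"
proof -
  have "2 * \<bar>y\<bar> * \<bar>b\<bar> \<le> S + W * y\<^sup>2"
  proof (cases "W = 0")
    case True
    then show ?thesis
      using assms by simp
  next
    case False
    have "W * (S + W * y\<^sup>2 - 2 * \<bar>y\<bar> * \<bar>b\<bar>) = (W * \<bar>y\<bar> - \<bar>b\<bar>)\<^sup>2 + (W * S - b\<^sup>2)"
      by (simp add: power2_eq_square algebra_simps)
    also have "\<dots> \<ge> 0"
      using assms(1) by simp
    finally show ?thesis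
      using False assms(2) by (simp add: zero_le_mult_iff)
  qed
  then have "\<bar>c\<bar> * (2 * \<bar>y\<bar> * \<bar>b\<bar>) \<le> \<bar>c\<bar> * (S + W * y\<^sup>2)"
    by (rule mult_left_mono) simp
  moreover have "(c * y + b)\<^sup>2 \<le> (\<bar>c\<bar> * \<bar>y\<bar> + \<bar>b\<bar>)\<^sup>2"
    by (metis abs_mult abs_triangle_ineq abs_ge_zero power2_abs power_mono)
  ultimately show ?thesis
    using assms(1) by (simp add: power2_eq_square algebra_simps)
qed

lemma hermite_sum_square_le:
  "(hermite_sum xs t)\<^sup>2 \<le> coeff_weight xs * (\<Sum>(c, m)\<leftarrow>xs. \<bar>c\<bar> * (hermite_function m t)\<^sup>2)"
proof (induction xs)
  case (Cons p xs)
  obtain c m where p: "p = (c, m)"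
    by fastforce
  have "(\<Sum>(c, m)\<leftarrow>xs. \<bar>c\<bar> * (hermite_function m t)\<^sup>2) \<ge> 0"
    by (induction xs) auto
  with Cons p show ?case
    by (simp add: square_add_le_weighted coeff_weight_nonneg)
qed simp

lemma weighted_hermite_function_square_integral:
  "integrable lborel (\<lambda>t. \<Sum>(c, m)\<leftarrow>xs. \<bar>c\<bar> * (hermite_function m t)\<^sup>2)
    \<and> integral\<^sup>L lborel (\<lambda>t. \<Sum>(c, m)\<leftarrow>xs. \<bar>c\<bar> * (hermite_function m t)\<^sup>2) = coeff_weight xs"
proof (induction xs)
  case (Cons p xs)
  obtain c m where p: "p = (c, m)"
    by fastforce
  have "integrable lborel (\<lambda>t. \<bar>c\<bar> * (hermite_function m t)\<^sup>2)"
    by (intro integrable_mult_right integrable_hermite_function_square)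
  with Cons p show ?case
    by (simp add: integral_hermite_function_square)
qed simp

lemma hermite_sum_square_integral_le:
  "integrable lborel (\<lambda>t. (hermite_sum xs t)\<^sup>2)
    \<and> integral\<^sup>L lborel (\<lambda>t. (hermite_sum xs t)\<^sup>2) \<le> (coeff_weight xs)\<^sup>2"
proof
  let ?g = "\<lambda>t. coeff_weight xs * (\<Sum>(c, m)\<leftarrow>xs. \<bar>c\<bar> * (hermite_function m t)\<^sup>2)"
  have g: "integrable lborel ?g" "integral\<^sup>L lborel ?g = (coeff_weight xs)\<^sup>2"
    using weighted_hermite_function_square_integral[of xs] by (simp_all add: power2_eq_square)
  show int: "integrable lborel (\<lambda>t. (hermite_sum xs t)\<^sup>2)"
  proof (rule Bochner_Integration.integrable_bound[OF g(1)])
    show "(\<lambda>t. (hermite_sum xs t)\<^sup>2) \<in> borel_measurable lborel"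
      by (simp add: measurable_lborel2 borel_measurable_continuous_onI continuous_intros
          continuous_on_hermite_sum)
    show "AE t in lborel. norm ((hermite_sum xs t)\<^sup>2) \<le> norm (?g t)"
      using hermite_sum_square_le[of xs] by (intro AE_I2) (auto intro: order_trans[OF _ abs_ge_self])
  qed
  show "integral\<^sup>L lborel (\<lambda>t. (hermite_sum xs t)\<^sup>2) \<le> (coeff_weight xs)\<^sup>2"
    using integral_mono[OF int g(1) hermite_sum_square_le] g(2) by simp
qed

lemma hermite_function_eq_hermite_sum: "hermite_function n = hermite_sum [(1, n)]"
  by (simp add: fun_eq_iff)

lemma hermite_function_moment_bound:
  fixes n a b :: nat
  defines "u \<equiv> \<lambda>t. t ^ a * (deriv ^^ b) (hermite_function n) t"
  shows "integrable lborel (\<lambda>t. (u t)\<^sup>2)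
    \<and> integral\<^sup>L lborel (\<lambda>t. (u t)\<^sup>2) \<le> ((2 * sqrt (real (max n (a + b)))) ^ (a + b))\<^sup>2"
proof -
  define ys where "ys = (ladder (-1) ^^ b) [(1, n)]"
  have u: "u = hermite_sum ((ladder 1 ^^ a) ys)"
    by (simp add: u_def ys_def hermite_function_eq_hermite_sum funpow_deriv_hermite_sum
        power_times_hermite_sum fun_eq_iff)
  have ys: "snd ` set ys \<subseteq> {..n + b}" "coeff_weight ys \<le> (2 * ladder_coeff (n + b)) ^ b"
    using funpow_ladder_bounds[of "-1" "[(1, n)]" n b] by (simp_all add: ys_def)
  have "coeff_weight ((ladder 1 ^^ a) ys) \<le> (2 * ladder_coeff (n + b + a)) ^ a * coeff_weight ys"
    using funpow_ladder_bounds[of 1 ys "n + b" a] ys(1) by simp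
  also have "\<dots> \<le> (2 * ladder_coeff (n + (a + b))) ^ a * (2 * ladder_coeff (n + (a + b))) ^ b"
    using ys(2) by (intro mult_mono power_mono order_trans[OF ys(2)])
      (simp_all add: ladder_coeff_nonneg ladder_coeff_mono coeff_weight_nonneg add_ac)
  also have "\<dots> \<le> (2 * sqrt (real (max n (a + b)))) ^ (a + b)"
    unfolding power_add[symmetric] ladder_coeff_def
    by (intro power_mono mult_left_mono real_sqrt_le_mono) (auto simp: max_def)
  finally have "(coeff_weight ((ladder 1 ^^ a) ys))\<^sup>2 \<le> ((2 * sqrt (real (max n (a + b)))) ^ (a + b))\<^sup>2"
    by (intro power_mono coeff_weight_nonneg)
  then show ?thesis
    unfolding u using hermite_sum_square_integral_le[of "(ladder 1 ^^ a) ys"] by auto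
qed

lemma integral_lborel_prod_Basis:
  fixes V :: "'a::euclidean_space \<Rightarrow> real \<Rightarrow> real"
  assumes "\<And>b. b \<in> Basis \<Longrightarrow> integrable lborel (V b)"
  shows "integral\<^sup>L lborel (\<lambda>x::'a. \<Prod>b\<in>Basis. V b (x \<bullet> b)) = (\<Prod>b\<in>Basis. integral\<^sup>L lborel (V b))"
proof -
  interpret product_sigma_finite "\<lambda>_. lborel"
    by standard
  have [measurable]: "V b \<in> borel_measurable borel" if "b \<in> Basis" for b
    using borel_measurable_integrable[OF assms[OF that]] by simp
  have "integral\<^sup>L lborel (\<lambda>x::'a. \<Prod>b\<in>Basis. V b (x \<bullet> b))
      = integral\<^sup>L (\<Pi>\<^sub>M b\<in>Basis. lborel) (\<lambda>f. \<Prod>b\<in>Basis. V b ((\<Sum>b\<in>Basis. f b *\<^sub>R b) \<bullet> b))"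
    by (subst lborel_eq) (rule integral_distr; measurable)
  also have "\<dots> = integral\<^sup>L (\<Pi>\<^sub>M b\<in>Basis. lborel) (\<lambda>f. \<Prod>b\<in>Basis. V b (f b))"
    by (intro Bochner_Integration.integral_cong refl prod.cong) simp
  also have "\<dots> = (\<Prod>b\<in>Basis. integral\<^sup>L lborel (V b))"
    using assms by (intro product_integral_prod) auto
  finally show ?thesis .
qed

definition tensor :: "('n::finite \<Rightarrow> real \<Rightarrow> real) \<Rightarrow> real^'n \<Rightarrow> real" where
  "tensor \<Phi> x = (\<Prod>j\<in>UNIV. \<Phi> j (x $ j))"

lemma Basis_vec_eq_range_axis: "(Basis :: (real^'n) set) = range (\<lambda>j. axis j 1)"
  by (auto simp: Basis_vec_def)

lemma inj_axis_one: "inj (\<lambda>j. axis j 1 :: real^'n)"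
  by (auto simp: inj_def axis_eq_axis)

lemma tensor_eq_prod_Basis: "tensor \<Phi> x = (\<Prod>b\<in>Basis. \<Phi> (axis_index b) (x \<bullet> b))"
  unfolding tensor_def Basis_vec_eq_range_axis prod.reindex[OF inj_axis_one]
  by (simp add: cart_eq_inner_axis)

lemma integral_tensor:
  fixes \<Phi> :: "'n::finite \<Rightarrow> real \<Rightarrow> real"
  assumes "\<And>j. integrable lborel (\<Phi> j)"
  shows "integral\<^sup>L lborel (tensor \<Phi>) = (\<Prod>j\<in>UNIV. integral\<^sup>L lborel (\<Phi> j))"
proof -
  have "integral\<^sup>L lborel (tensor \<Phi>) = (\<Prod>b\<in>Basis. integral\<^sup>L lborel (\<Phi> (axis_index (b :: real^'n))))"
    unfolding tensor_eq_prod_Basis[abs_def]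
    by (rule integral_lborel_prod_Basis) (use assms in blast)
  then show ?thesis
    unfolding Basis_vec_eq_range_axis prod.reindex[OF inj_axis_one] by simp
qed

lemma real_sqrt_prod: "sqrt (\<Prod>j\<in>A. f j) = (\<Prod>j\<in>A. sqrt (f j))"
  by (induction A rule: infinite_finite_induct) (simp_all add: real_sqrt_mult)

lemma L2norm_tensor:
  assumes "\<And>j. integrable lborel (\<lambda>t. (\<Phi> j t)\<^sup>2)"
  shows "L2norm (tensor \<Phi>) = (\<Prod>j\<in>UNIV. sqrt (integral\<^sup>L lborel (\<lambda>t. (\<Phi> j t)\<^sup>2)))"
proof -
  have "(\<lambda>x. (tensor \<Phi> x)\<^sup>2) = tensor (\<lambda>j t. (\<Phi> j t)\<^sup>2)"
    by (simp add: tensor_def fun_eq_iff power_mult_distrib prod_power_distrib)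
  then show ?thesis
    using assms by (simp add: L2norm_def integral_tensor real_sqrt_prod)
qed

lemma tensor_add_axis:
  "tensor \<Phi> (x + t *\<^sub>R axis i 1) = (\<Prod>j\<in>UNIV - {i}. \<Phi> j (x $ j)) * \<Phi> i (x $ i + t)"
  unfolding tensor_def by (subst prod.remove[of _ i]) (auto intro!: prod.cong simp: axis_def)

lemma pdiff_tensor:
  assumes "\<Phi> i differentiable (at (x $ i))"
  shows "pdiff i (tensor \<Phi>) x = tensor (\<Phi>(i := deriv (\<Phi> i))) x"
proof -
  let ?c = "\<Prod>j\<in>UNIV - {i}. \<Phi> j (x $ j)"
  have "(\<Phi> i has_real_derivative deriv (\<Phi> i) (x $ i)) (at (x $ i))"
    using assms by (simp add: DERIV_deriv_iff_real_differentiable)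
  then have "((\<lambda>t. ?c * \<Phi> i (x $ i + t)) has_real_derivative ?c * deriv (\<Phi> i) (x $ i)) (at 0)"
    using DERIV_shift[of "\<Phi> i" _ 0 "x $ i"] by (intro DERIV_cmult) (simp add: add.commute)
  then have "pdiff i (tensor \<Phi>) x = ?c * deriv (\<Phi> i) (x $ i)"
    unfolding pdiff_def tensor_add_axis by (rule DERIV_imp_deriv)
  also have "\<dots> = tensor (\<Phi>(i := deriv (\<Phi> i))) x"
    unfolding tensor_def by (subst prod.remove[of _ i]) (auto intro!: prod.cong)
  finally show ?thesis .
qed

definition infinitely_differentiable :: "(real \<Rightarrow> real) \<Rightarrow> bool" where
  "infinitely_differentiable f \<longleftrightarrow> (\<forall>k t. (deriv ^^ k) f differentiable (at t))"

lemma funpow_pdiff_tensor: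
  assumes "infinitely_differentiable (\<Phi> i)"
  shows "(pdiff i ^^ k) (tensor \<Phi>) = tensor (\<Phi>(i := (deriv ^^ k) (\<Phi> i)))"
proof (induction k)
  case (Suc k)
  have "pdiff i (tensor (\<Phi>(i := (deriv ^^ k) (\<Phi> i))))
      = tensor (\<Phi>(i := (deriv ^^ Suc k) (\<Phi> i)))"
    using assms unfolding infinitely_differentiable_def
    by (intro ext, subst pdiff_tensor) simp_all
  then show ?case
    by (simp only: funpow.simps(2) o_apply Suc.IH)
qed simp

lemma foldr_funpow_pdiff_tensor:
  assumes "\<And>j. infinitely_differentiable (\<Phi> j)" and "distinct js"
  shows "foldr (\<lambda>j g. (pdiff j ^^ \<beta> j) g) js (tensor \<Phi>)
    = tensor (\<lambda>j. if j \<in> set js then (deriv ^^ \<beta> j) (\<Phi> j) else \<Phi> j)"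
  using assms(2)
proof (induction js)
  case (Cons i js)
  let ?\<Psi> = "\<lambda>j. if j \<in> set js then (deriv ^^ \<beta> j) (\<Phi> j) else \<Phi> j"
  have "i \<notin> set js"
    using Cons.prems by simp
  then have "(pdiff i ^^ \<beta> i) (tensor ?\<Psi>) = tensor (?\<Psi>(i := (deriv ^^ \<beta> i) (\<Phi> i)))"
    using funpow_pdiff_tensor[of ?\<Psi> i] assms(1) by simp
  also have "?\<Psi>(i := (deriv ^^ \<beta> i) (\<Phi> i)) = (\<lambda>j. if j \<in> set (i # js) then (deriv ^^ \<beta> j) (\<Phi> j) else \<Phi> j)"
    by (auto simp: fun_eq_iff)
  finally show ?case
    using Cons by simp
qed simp

lemma Dmulti_tensor:
  fixes \<Phi> :: "'n::{finite,linorder} \<Rightarrow> real \<Rightarrow> real"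
  assumes "\<And>j. infinitely_differentiable (\<Phi> j)"
  shows "Dmulti \<beta> (tensor \<Phi>) = tensor (\<lambda>j. (deriv ^^ \<beta> j) (\<Phi> j))"
  unfolding Dmulti_def by (simp add: foldr_funpow_pdiff_tensor[OF assms])

lemma funpow_deriv_gaussian:
  "(deriv ^^ k) (\<lambda>t. exp (- t\<^sup>2)) = (\<lambda>t. (-1) ^ k * (hermite k t * exp (- t\<^sup>2)))"
proof (induction k)
  case (Suc k)
  have "((\<lambda>t. (-1) ^ k * (hermite k t * exp (- t\<^sup>2))) has_real_derivative
      (-1) ^ Suc k * (hermite (Suc k) t * exp (- t\<^sup>2))) (at t)" for t
    using DERIV_cmult[OF hermite_gaussian_has_real_derivative, of "(-1) ^ k" k t] by simp
  then show ?case
    using DERIV_imp_deriv by (fastforce simp: Suc.IH)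
qed simp

lemma infinitely_differentiable_gaussian: "infinitely_differentiable (\<lambda>t. exp (- t\<^sup>2))"
  unfolding infinitely_differentiable_def funpow_deriv_gaussian real_differentiable_def
  using DERIV_cmult[OF hermite_gaussian_has_real_derivative] by blast

lemma infinitely_differentiable_hermite_function: "infinitely_differentiable (hermite_function n)"
  using hermite_sum_has_real_derivative
  by (auto simp: infinitely_differentiable_def hermite_function_eq_hermite_sum funpow_deriv_hermite_sum
      real_differentiable_def)

lemma power2_norm_vec: "(norm (x :: real^'n))\<^sup>2 = (\<Sum>j\<in>UNIV. (x $ j)\<^sup>2)"
  unfolding power2_norm_eq_inner inner_vec_def by (simp add: power2_eq_square)

lemma gaussian_eq_tensor: "(\<lambda>x::real^'n. exp (- (norm x)\<^sup>2)) = tensor (\<lambda>j t. exp (- t\<^sup>2))"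
  by (simp add: fun_eq_iff tensor_def power2_norm_vec exp_sum sum_negf[symmetric])

lemma hermite_fun_normalization:
  fixes \<gamma> :: "'n::finite \<Rightarrow> nat"
  shows "inverse (sqrt (2 ^ mlen \<gamma> * mfact \<gamma> * pi powr (real CARD('n) / 2)))
    = (\<Prod>j\<in>UNIV. inverse (hermite_norm (\<gamma> j)))"
proof -
  have "pi powr (real CARD('n) / 2) = (\<Prod>j\<in>(UNIV::'n set). sqrt pi)"
    by (simp add: powr_half_sqrt_powr powr_realpow real_sqrt_power)
  then have "2 ^ mlen \<gamma> * mfact \<gamma> * pi powr (real CARD('n) / 2)
      = (\<Prod>j\<in>UNIV. 2 ^ \<gamma> j * fact (\<gamma> j) * sqrt pi)"
    by (simp add: mlen_def mfact_def power_sum prod.distrib)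
  then show ?thesis
    by (simp add: real_sqrt_prod prod_inversef[symmetric] hermite_norm_def)
qed

lemma hermite_fun_eq_tensor:
  fixes \<gamma> :: "'n::{finite,linorder} \<Rightarrow> nat"
  shows "hermite_fun \<gamma> = tensor (\<lambda>j. hermite_function (\<gamma> j))"
proof
  fix x
  have D: "Dmulti \<gamma> (\<lambda>y. exp (- (norm y)\<^sup>2)) x
      = (\<Prod>j\<in>UNIV. (-1) ^ \<gamma> j * (hermite (\<gamma> j) (x $ j) * exp (- (x $ j)\<^sup>2)))"
    unfolding gaussian_eq_tensor
    by (simp add: Dmulti_tensor infinitely_differentiable_gaussian funpow_deriv_gaussian tensor_def)
  have "(-1::real) ^ mlen \<gamma> = (\<Prod>j\<in>UNIV. (-1) ^ \<gamma> j)"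
    by (simp add: mlen_def power_sum)
  moreover have "exp ((norm x)\<^sup>2) = (\<Prod>j\<in>UNIV. exp ((x $ j)\<^sup>2))"
    by (simp add: power2_norm_vec exp_sum)
  moreover have "exp (- (norm x)\<^sup>2 / 2) = (\<Prod>j\<in>UNIV. exp (- (x $ j)\<^sup>2 / 2))"
    by (simp add: power2_norm_vec exp_sum sum_negf[symmetric] sum_divide_distrib)
  ultimately have "hermite_fun \<gamma> x = (\<Prod>j\<in>UNIV. inverse (hermite_norm (\<gamma> j))
      * ((-1) ^ \<gamma> j * exp ((x $ j)\<^sup>2) * ((-1) ^ \<gamma> j * (hermite (\<gamma> j) (x $ j) * exp (- (x $ j)\<^sup>2))))
      * exp (- (x $ j)\<^sup>2 / 2))"
    by (simp add: hermite_fun_def hermite_poly_def hermite_fun_normalization D prod.distrib)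
  also have "\<dots> = tensor (\<lambda>j. hermite_function (\<gamma> j)) x"
    unfolding tensor_def
  proof (rule prod.cong[OF refl])
    fix j
    have "(-1::real) ^ \<gamma> j * (-1) ^ \<gamma> j = 1" "exp ((x $ j)\<^sup>2) * exp (- (x $ j)\<^sup>2) = 1"
      by (simp_all add: power_mult_distrib[symmetric] exp_minus)
    then show "inverse (hermite_norm (\<gamma> j))
      * ((-1) ^ \<gamma> j * exp ((x $ j)\<^sup>2) * ((-1) ^ \<gamma> j * (hermite (\<gamma> j) (x $ j) * exp (- (x $ j)\<^sup>2))))
      * exp (- (x $ j)\<^sup>2 / 2) = hermite_function (\<gamma> j) (x $ j)"
      by (simp add: hermite_function_def field_simps)
  qed
  finally show "hermite_fun \<gamma> x = tensor (\<lambda>j. hermite_function (\<gamma> j)) x" .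
qed

lemma L2norm_hermite_moment_le:
  fixes \<alpha> \<beta> \<gamma> :: "'n::{finite,linorder} \<Rightarrow> nat"
  shows "L2norm (\<lambda>x. mpow x \<alpha> * Dmulti \<beta> (hermite_fun \<gamma>) x)
    \<le> (\<Prod>j\<in>UNIV. (2 * sqrt (real (max (\<gamma> j) (\<alpha> j + \<beta> j)))) ^ (\<alpha> j + \<beta> j))"
proof -
  define U where "U j t = t ^ \<alpha> j * (deriv ^^ \<beta> j) (hermite_function (\<gamma> j)) t" for j t
  have U: "(\<lambda>x. mpow x \<alpha> * Dmulti \<beta> (hermite_fun \<gamma>) x) = tensor U"
    by (simp add: hermite_fun_eq_tensor Dmulti_tensor infinitely_differentiable_hermite_function
        tensor_def mpow_def U_def prod.distrib fun_eq_iff)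
  have int: "integrable lborel (\<lambda>t. (U j t)\<^sup>2)"
    and le: "integral\<^sup>L lborel (\<lambda>t. (U j t)\<^sup>2) \<le> ((2 * sqrt (real (max (\<gamma> j) (\<alpha> j + \<beta> j)))) ^ (\<alpha> j + \<beta> j))\<^sup>2"
    for j
    using hermite_function_moment_bound[where n="\<gamma> j" and a="\<alpha> j" and b="\<beta> j"]
    by (simp_all add: U_def)
  have "sqrt (integral\<^sup>L lborel (\<lambda>t. (U j t)\<^sup>2)) \<le> (2 * sqrt (real (max (\<gamma> j) (\<alpha> j + \<beta> j)))) ^ (\<alpha> j + \<beta> j)"
    for j
    using real_sqrt_le_mono[OF le[of j]] by simp
  then show ?thesis
    unfolding U L2norm_tensor[OF int] by (intro prod_mono) simp
qed

lemma exp_weight_fun_ge: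
  assumes "M \<alpha> > 0" and "\<forall>j. t $ j = 0 \<longrightarrow> \<alpha> j = 0"
  shows "ereal (\<bar>mpow t \<alpha>\<bar> / M \<alpha>) \<le> exp_ereal (weight_fun M t)"
proof -
  have "mpow t \<alpha> \<noteq> 0"
    using assms(2) by (auto simp: mpow_def)
  then have q: "\<bar>mpow t \<alpha>\<bar> / M \<alpha> > 0"
    using assms(1) by simp
  have w: "ereal (ln (\<bar>mpow t \<alpha>\<bar> / M \<alpha>)) \<le> weight_fun M t"
    unfolding weight_fun_def using assms(2) by (intro SUP_upper) simp
  show ?thesis
  proof (cases "weight_fun M t")
    case (real r)
    then have "exp (ln (\<bar>mpow t \<alpha>\<bar> / M \<alpha>)) \<le> exp r"
      using w by simp
    with q real show ?thesis
      by (simp add: exp_ereal_def)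
  qed (use w in \<open>simp_all add: exp_ereal_def\<close>)
qed

lemma prod_max_power_split:
  fixes \<gamma> k :: "'n::finite \<Rightarrow> nat"
  defines "a \<equiv> \<lambda>j. if \<gamma> j < k j then k j else 0"
    and "b \<equiv> \<lambda>j. if \<gamma> j < k j then 0 else k j"
  shows "(\<Prod>j\<in>UNIV. (2 * sqrt (real (max (\<gamma> j) (k j)))) ^ k j)
    = 2 ^ mlen k * mselfpow_half a * mpow (\<chi> j. sqrt (real (\<gamma> j))) b"
proof -
  have "(2 * sqrt (real (max (\<gamma> j) (k j)))) ^ k j
      = 2 ^ k j * (sqrt (real (a j)) ^ a j * sqrt (real (\<gamma> j)) ^ b j)" for j
    by (simp add: a_def b_def power_mult_distrib max_def)
  then show ?thesis
    by (simp add: mlen_def mselfpow_half_def mpow_def power_sum prod.distrib)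
qed

lemma hermite_moment_quotient_le:
  fixes M N :: "('n::{finite,linorder} \<Rightarrow> nat) \<Rightarrow> real" and \<alpha> \<beta> \<gamma> :: "'n \<Rightarrow> nat"
  assumes "M b > 0" and "N (madd \<alpha> \<beta>) > 0" and "H > 0" and "C > 0"
    and hyp: "\<And>\<alpha> \<beta>. mselfpow_half \<alpha> * M \<beta> \<le> B * C ^ mlen \<alpha> * H ^ mlen (madd \<alpha> \<beta>) * N (madd \<alpha> \<beta>)"
    and b_def: "b = (\<lambda>j. if \<gamma> j < \<alpha> j + \<beta> j then 0 else \<alpha> j + \<beta> j)"
  shows "L2norm (\<lambda>x. mpow x \<alpha> * Dmulti \<beta> (hermite_fun \<gamma>) x) / ((2 * H * C) ^ mlen (madd \<alpha> \<beta>) * N (madd \<alpha> \<beta>))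
    \<le> B * (\<bar>mpow (\<chi> j. sqrt (real (\<gamma> j)) / C) b\<bar> / M b)"
proof -
  define k where "k = madd \<alpha> \<beta>"
  define a where "a = (\<lambda>j. if \<gamma> j < \<alpha> j + \<beta> j then \<alpha> j + \<beta> j else 0)"
  define m where "m = mpow (\<chi> j. sqrt (real (\<gamma> j))) b"
  define S where "S = mselfpow_half a"
  have ab: "madd a b = k"
    by (simp add: a_def b_def k_def madd_def fun_eq_iff)
  have mlen_k: "mlen k = mlen a + mlen b"
    unfolding ab[symmetric] by (simp add: mlen_def madd_def sum.distrib)
  have "m \<ge> 0" "S \<ge> 0"
    by (simp_all add: m_def S_def mpow_def mselfpow_half_def prod_nonneg)
  have "L2norm (\<lambda>x. mpow x \<alpha> * Dmulti \<beta> (hermite_fun \<gamma>) x) \<le> 2 ^ mlen k * S * m"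
    using L2norm_hermite_moment_le[of \<alpha> \<beta> \<gamma>] prod_max_power_split[of \<gamma> "\<lambda>j. \<alpha> j + \<beta> j"]
    by (simp add: k_def madd_def a_def b_def S_def m_def)
  then have "L2norm (\<lambda>x. mpow x \<alpha> * Dmulti \<beta> (hermite_fun \<gamma>) x) / ((2 * H * C) ^ mlen k * N k)
      \<le> 2 ^ mlen k * S * m / ((2 * H * C) ^ mlen k * N k)"
    using assms(2-4) by (intro divide_right_mono) (simp_all add: k_def)
  also have "\<dots> = S * m / (C ^ mlen a * H ^ mlen k * N k * C ^ mlen b)"
    using assms(2-4) unfolding k_def[symmetric] by (simp add: mlen_k power_mult_distrib power_add)
  also have "\<dots> \<le> (B * C ^ mlen a * H ^ mlen k * N k / M b) * m / (C ^ mlen a * H ^ mlen k * N k * C ^ mlen b)"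
    using hyp[of a b] assms \<open>m \<ge> 0\<close> unfolding ab S_def k_def[symmetric]
    by (intro divide_right_mono mult_right_mono) (simp_all add: field_simps)
  also have "\<dots> = B * (\<bar>mpow (\<chi> j. sqrt (real (\<gamma> j)) / C) b\<bar> / M b)"
    using assms(2-4) \<open>m \<ge> 0\<close>
    by (simp add: m_def mpow_def k_def mlen_def power_divide prod_dividef power_sum abs_prod)
  finally show ?thesis
    by (simp add: k_def)
qed

theorem lemma4p5:
  fixes M N :: "('n::{finite,linorder} \<Rightarrow> nat) \<Rightarrow> real"
    and H C B :: real
  assumes Mpos: "\<And>\<alpha>. M \<alpha> > 0" and Npos: "\<And>\<alpha>. N \<alpha> > 0"
    and M0: "M (\<lambda>_. 0) = 1" and N0: "N (\<lambda>_. 0) = 1"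
    and H: "H > 0" and C: "C > 0" and B: "B > 0"
    and hyp: "\<And>\<alpha> \<beta>. mselfpow_half \<alpha> * M \<beta>
                 \<le> B * C ^ mlen \<alpha> * H ^ mlen (madd \<alpha> \<beta>) * N (madd \<alpha> \<beta>)"
  shows "\<forall>\<gamma> \<alpha> \<beta>.
    ereal (L2norm (\<lambda>x. mpow x \<alpha> * Dmulti \<beta> (hermite_fun \<gamma>) x)
             / ((2 * H * C) ^ mlen (madd \<alpha> \<beta>) * N (madd \<alpha> \<beta>)))
    \<le> ereal B * exp_ereal (weight_fun M (\<chi> j. sqrt (real (\<gamma> j)) / C))"
proof (intro allI)
  fix \<gamma> \<alpha> \<beta> :: "'n \<Rightarrow> nat"
  let ?t = "\<chi> j. sqrt (real (\<gamma> j)) / C"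
  define b where "b = (\<lambda>j. if \<gamma> j < \<alpha> j + \<beta> j then 0 else \<alpha> j + \<beta> j)"
  have "\<forall>j. ?t $ j = 0 \<longrightarrow> b j = 0"
    using C by (simp add: b_def)
  then have weight: "ereal (\<bar>mpow ?t b\<bar> / M b) \<le> exp_ereal (weight_fun M ?t)"
    by (intro exp_weight_fun_ge Mpos)
  have "L2norm (\<lambda>x. mpow x \<alpha> * Dmulti \<beta> (hermite_fun \<gamma>) x)
      / ((2 * H * C) ^ mlen (madd \<alpha> \<beta>) * N (madd \<alpha> \<beta>)) \<le> B * (\<bar>mpow ?t b\<bar> / M b)"
    (is "?q \<le> _")
    by (rule hermite_moment_quotient_le[OF Mpos Npos H C hyp b_def])
  then have "ereal ?q \<le> ereal B * ereal (\<bar>mpow ?t b\<bar> / M b)"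
    by simp
  also have "\<dots> \<le> ereal B * exp_ereal (weight_fun M ?t)"
    using B by (intro ereal_mult_left_mono weight) simp
  finally show "ereal ?q \<le> ereal B * exp_ereal (weight_fun M ?t)" .
qed

end
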